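(* Let $D=2$, $K<C$, and let user and creator types be drawn i.i.d. from the uniform distribution on $\{x\in\mathbb R^2_{\ge0}:\|x\|_2=1\}$. Index the creators in increasing order of angle, so that $c_i=(\cos(X_i\pi/2),\sin(X_i\pi/2))$ where $X_1\le\dots\le X_C$ are the order statistics of $C$ i.i.d. $\mathrm{Uniform}[0,1]$ variables. Define $R_1=\left[0,\frac{X_1+X_{K+1}}2\right]$, $R_i=\left(\frac{X_{i-1}+X_{i+K-1}}2,\frac{X_i+X_{i+K}}2\right]$ for $2\le i\le C-K$, and $R_{C-K+1}=\left(\frac{X_{C-K}+X_C}2,1\right]$. Then at $t=0$, the user-centric algorithm assigns a user with type $(\cos(y\pi/2),\sin(y\pi/2))$, $y\in[0,1]$, to creators $\{i,i+1,\dots,i+K-1\}$ if and only if $y\in R_i$.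
   Context: The user-centric algorithm at $t=0$ assigns each user $i$ the set $UC_0(i)\in\arg\max_{S\subseteq\mathcal C_0,|S|\le K}\sum_{j\in S}u_i^Tc_j$, i.e. her $K$ creators of highest engagement $u_i^Tc_j$. *)

theory Defs
  imports "HOL-Analysis.Analysis"
begin

definition circ_pt :: "real \<Rightarrow> real \<times> real" where
  "circ_pt x = (cos (x * pi / 2), sin (x * pi / 2))"

text \<open>The user-centric assignment at t = 0 for a user of type u: the set of all
  maximizers S of the total engagement sum_{j in S} u . c_j over S subset {1..C}, |S| <= K.\<close>
definition UC0 :: "(nat \<Rightarrow> real) \<Rightarrow> nat \<Rightarrow> nat \<Rightarrow> real \<times> real \<Rightarrow> nat set set" where
  "UC0 X C K u = {S. S \<subseteq> {1..C} \<and> card S \<le> K \<and>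
      (\<forall>T. T \<subseteq> {1..C} \<and> card T \<le> K \<longrightarrow>
          (\<Sum>j\<in>T. u \<bullet> circ_pt (X j)) \<le> (\<Sum>j\<in>S. u \<bullet> circ_pt (X j)))}"

definition region :: "(nat \<Rightarrow> real) \<Rightarrow> nat \<Rightarrow> nat \<Rightarrow> nat \<Rightarrow> real set" where
  "region X C K i =
     (if i = 1 then {0 .. (X 1 + X (K + 1)) / 2}
      else if i = C - K + 1 then {(X (C - K) + X C) / 2 <.. 1}
      else {(X (i - 1) + X (i + K - 1)) / 2 <.. (X i + X (i + K)) / 2})"

end

theory Submission
  imports Defs
begin

text \<open>The engagement of a user at angle parameter y with a creator at x is cos ((y - x) pi / 2),
  which is nonnegative and decreasing in the distance |y - x| on [-1, 1]. Hence any K creators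
  nearest to y maximise the total engagement, by an exchange argument. For sorted creators the
  window i, ..., i + K - 1 is nearest to y as soon as y lies between the midpoints
  (X (i - 1) + X (i + K - 1)) / 2 and (X i + X (i + K)) / 2, which is exactly the region R_i.
  Conversely, the regions cover [0, 1], so if the optimal set is unique it is the window of the
  region containing y.\<close>

lemma circ_pt_inner: "circ_pt y \<bullet> circ_pt x = cos ((y - x) * pi / 2)"
  unfolding circ_pt_def by (simp add: cos_diff left_diff_distrib diff_divide_distrib)

lemma cos_half_pi_antimono_abs:
  fixes d e :: real
  assumes "\<bar>d\<bar> \<le> \<bar>e\<bar>" and "\<bar>e\<bar> \<le> 1"
  shows "cos (e * pi / 2) \<le> cos (d * pi / 2)"
proof -
  have cos_abs: "cos (t * pi / 2) = cos (\<bar>t\<bar> * pi / 2)" for t :: real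
    by (metis abs_divide abs_mult abs_of_nonneg cos_abs_real pi_ge_zero zero_le_numeral)
  have "\<bar>d\<bar> * pi / 2 \<le> \<bar>e\<bar> * pi / 2"
    using assms by (simp add: divide_right_mono mult_right_mono)
  moreover have "\<bar>e\<bar> * pi / 2 \<le> pi"
    using assms pi_gt_zero by (simp add: mult_left_le_one_le)
  moreover have "0 \<le> \<bar>d\<bar> * pi / 2"
    by simp
  ultimately show ?thesis
    unfolding cos_abs[of d] cos_abs[of e] by (simp add: cos_mono_le_eq)
qed

lemma cos_half_pi_nonneg:
  fixes d :: real
  assumes "\<bar>d\<bar> \<le> 1"
  shows "0 \<le> cos (d * pi / 2)"
  using cos_half_pi_antimono_abs[of d 1] assms by simp

text \<open>Every element of T - W is worth at most min f(W), and W - T has at least as many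
  elements, each worth at least that much.\<close>
lemma sum_le_sum_of_dominating:
  fixes f :: "'a \<Rightarrow> real"
  assumes "finite W" "finite T" and "card T \<le> card W"
    and dominates: "\<And>a b. a \<in> W \<Longrightarrow> b \<in> T - W \<Longrightarrow> f b \<le> f a"
    and nonneg: "\<And>a. a \<in> W \<Longrightarrow> 0 \<le> f a"
  shows "sum f T \<le> sum f W"
proof (cases "W = {}")
  case True
  then show ?thesis using assms(2,3) by simp
next
  case False
  define m where "m = Min (f ` W)"
  have m_le: "m \<le> f a" if "a \<in> W" for a
    unfolding m_def using \<open>finite W\<close> that by simp
  have "m \<in> f ` W"
    unfolding m_def using \<open>finite W\<close> False by simp
  then have le_m: "f b \<le> m" if "b \<in> T - W" for b
    using dominates that by blast
  have "0 \<le> m"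
    using \<open>m \<in> f ` W\<close> nonneg by blast
  have "card (T - W) \<le> card (W - T)"
    using assms(1-3) by (simp add: card_Diff_subset_Int Int_commute)
  have "sum f (T - W) \<le> card (T - W) * m"
    using sum_bounded_above[of "T - W" f m] le_m by simp
  also have "\<dots> \<le> card (W - T) * m"
    using \<open>card (T - W) \<le> card (W - T)\<close> \<open>0 \<le> m\<close> by (simp add: mult_right_mono)
  also have "\<dots> \<le> sum f (W - T)"
    using sum_bounded_below[of "W - T" m f] m_le by simp
  finally have "sum f (T - W) \<le> sum f (W - T)" .
  moreover have "sum f T = sum f (T \<inter> W) + sum f (T - W)"
    using \<open>finite T\<close> by (rule sum.Int_Diff)
  moreover have "sum f W = sum f (W \<inter> T) + sum f (W - T)"
    using \<open>finite W\<close> by (rule sum.Int_Diff)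
  ultimately show ?thesis by (simp add: Int_commute)
qed

lemma nearest_set_in_UC0:
  assumes "W \<subseteq> {1..C}" and "card W = K"
    and dist_le_1: "\<And>j. j \<in> {1..C} \<Longrightarrow> \<bar>y - X j\<bar> \<le> 1"
    and nearest: "\<And>a b. a \<in> W \<Longrightarrow> b \<in> {1..C} - W \<Longrightarrow> \<bar>y - X a\<bar> \<le> \<bar>y - X b\<bar>"
  shows "W \<in> UC0 X C K (circ_pt y)"
  unfolding UC0_def
proof (intro CollectI conjI allI impI)
  fix T assume T: "T \<subseteq> {1..C} \<and> card T \<le> K"
  show "(\<Sum>j\<in>T. circ_pt y \<bullet> circ_pt (X j)) \<le> (\<Sum>j\<in>W. circ_pt y \<bullet> circ_pt (X j))"
    unfolding circ_pt_inner
  proof (rule sum_le_sum_of_dominating)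
    show "finite W" "finite T"
      using T \<open>W \<subseteq> {1..C}\<close> finite_subset by auto
    show "card T \<le> card W"
      using T \<open>card W = K\<close> by simp
    show "cos ((y - X b) * pi / 2) \<le> cos ((y - X a) * pi / 2)" if "a \<in> W" "b \<in> T - W" for a b
      using that T by (intro cos_half_pi_antimono_abs nearest dist_le_1) auto
    show "0 \<le> cos ((y - X a) * pi / 2)" if "a \<in> W" for a
      using that \<open>W \<subseteq> {1..C}\<close> by (intro cos_half_pi_nonneg dist_le_1) auto
  qed
qed (use assms in auto)

lemma sorted_window_nearest:
  fixes X :: "nat \<Rightarrow> real"
  assumes sorted: "mono_on {1..C} X" and "1 \<le> i" and "k \<le> C"
    and lower: "1 < i \<Longrightarrow> (X (i - 1) + X k) / 2 < y"
    and upper: "k < C \<Longrightarrow> y \<le> (X i + X (k + 1)) / 2"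
    and a: "a \<in> {i..k}" and b: "b \<in> {1..C} - {i..k}"
  shows "\<bar>y - X a\<bar> \<le> \<bar>y - X b\<bar>"
proof -
  have X_le: "X j \<le> X j'" if "1 \<le> j" "j \<le> j'" "j' \<le> C" for j j'
    using sorted that by (auto intro: mono_onD)
  have "X i \<le> X a" "X a \<le> X k"
    using a \<open>1 \<le> i\<close> \<open>k \<le> C\<close> by (auto intro: X_le)
  consider "b < i" | "k < b"
    using b by force
  then show ?thesis
  proof cases
    case 1
    then have "X b \<le> X (i - 1)" "X (i - 1) \<le> X i" "1 < i"
      using a b \<open>k \<le> C\<close> by (auto intro: X_le)
    with lower \<open>X i \<le> X a\<close> \<open>X a \<le> X k\<close> show ?thesis by (auto simp: abs_if)
  next
    case 2
    then have "X (k + 1) \<le> X b" "X k \<le> X (k + 1)" "k < C"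
      using b a \<open>1 \<le> i\<close> by (auto intro: X_le)
    with upper \<open>X i \<le> X a\<close> \<open>X a \<le> X k\<close> show ?thesis by (auto simp: abs_if)
  qed
qed

lemma mem_region_iff:
  assumes "K < C" and "i \<in> {1..C - K + 1}" and "y \<in> {0..1}"
  shows "y \<in> region X C K i \<longleftrightarrow>
           (1 < i \<longrightarrow> (X (i - 1) + X (i + K - 1)) / 2 < y) \<and>
           (i < C - K + 1 \<longrightarrow> y \<le> (X i + X (i + K)) / 2)"
  using assms by (auto simp: region_def Suc_diff_le less_imp_le)

lemma exists_threshold_crossing:
  fixes m :: "nat \<Rightarrow> 'a::linorder"
  assumes "a \<le> b" and "m a < y" and "y \<le> m b"
  shows "\<exists>j. a \<le> j \<and> j < b \<and> m j < y \<and> y \<le> m (Suc j)"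
  using assms
proof (induction b rule: dec_induct)
  case base
  then show ?case by simp
next
  case (step n)
  show ?case
  proof (cases "y \<le> m n")
    case True
    then obtain j where "a \<le> j" "j < n" "m j < y" "y \<le> m (Suc j)"
      using step by blast
    then show ?thesis
      by (intro exI[of _ j]) auto
  next
    case False
    then show ?thesis
      using step by (intro exI[of _ n]) auto
  qed
qed

lemma region_cover:
  assumes "K < C" and "y \<in> {0..1}"
  shows "\<exists>i \<in> {1..C - K + 1}. y \<in> region X C K i"
proof -
  define mid where "mid j = (X j + X (j + K)) / 2" for j
  consider "y \<le> mid 1" | "mid (C - K) < y" | "mid 1 < y" "y \<le> mid (C - K)"
    by linarith
  then show ?thesis
  proof cases
    case 1
    then show ?thesis
      using assms by (intro bexI[of _ 1]) (auto simp: mem_region_iff mid_def)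
  next
    case 2
    then show ?thesis
      using assms by (intro bexI[of _ "C - K + 1"]) (auto simp: mem_region_iff mid_def)
  next
    case 3
    then obtain j where "1 \<le> j" "j < C - K" "mid j < y" "y \<le> mid (Suc j)"
      using exists_threshold_crossing[of 1 "C - K" mid y] assms by force
    then show ?thesis
      using assms by (intro bexI[of _ "Suc j"]) (auto simp: mem_region_iff mid_def)
  qed
qed

lemma region_window_in_UC0:
  assumes "1 \<le> K" and "K < C"
    and range: "X ` {1..C} \<subseteq> {0..1}" and sorted: "mono_on {1..C} X"
    and "y \<in> {0..1}" and i: "i \<in> {1..C - K + 1}" and "y \<in> region X C K i"
  shows "{i..i + K - 1} \<in> UC0 X C K (circ_pt y)"
proof (rule nearest_set_in_UC0)
  show "{i..i + K - 1} \<subseteq> {1..C}" "card {i..i + K - 1} = K"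
    using assms by auto
  show "\<bar>y - X j\<bar> \<le> 1" if "j \<in> {1..C}" for j
    using range that \<open>y \<in> {0..1}\<close> by fastforce
  show "\<bar>y - X a\<bar> \<le> \<bar>y - X b\<bar>"
    if "a \<in> {i..i + K - 1}" "b \<in> {1..C} - {i..i + K - 1}" for a b
  proof (rule sorted_window_nearest[OF sorted _ _ _ _ that])
    show "1 \<le> i" "i + K - 1 \<le> C"
      using assms by auto
    show "1 < i \<Longrightarrow> (X (i - 1) + X (i + K - 1)) / 2 < y"
         "i + K - 1 < C \<Longrightarrow> y \<le> (X i + X (i + K - 1 + 1)) / 2"
      using assms by (auto simp: mem_region_iff)
  qed
qed

theorem lemma11:
  fixes X :: "nat \<Rightarrow> real" and C K :: nat
  assumes "1 \<le> K" and "K < C"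
    and "\<And>j. j \<in> {1..C} \<Longrightarrow> 0 \<le> X j \<and> X j \<le> 1"
    and "\<And>j. 1 \<le> j \<Longrightarrow> j < C \<Longrightarrow> X j \<le> X (j + 1)"
  shows "\<forall>y \<in> {0..1}. \<forall>i \<in> {1..C - K + 1}.
           (y \<in> region X C K i \<longrightarrow> {i..i + K - 1} \<in> UC0 X C K (circ_pt y)) \<and>
           (UC0 X C K (circ_pt y) = {{i..i + K - 1}} \<longrightarrow> y \<in> region X C K i)"
proof (intro ballI conjI impI)
  have sorted: "mono_on {1..C} X"
  proof (rule mono_onI)
    show "X j \<le> X k" if "j \<in> {1..C}" "k \<in> {1..C}" "j \<le> k" for j k
      by (rule lift_Suc_mono_le_ivl[where N = "{1..<C}"]) (use assms(4) that in auto)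
  qed
  have range: "X ` {1..C} \<subseteq> {0..1}"
    using assms(3) by auto
  note window_in_UC0 = region_window_in_UC0[OF assms(1,2) range sorted]
  fix y :: real and i :: nat
  assume y: "y \<in> {0..1}" and i: "i \<in> {1..C - K + 1}"
  show "{i..i + K - 1} \<in> UC0 X C K (circ_pt y)" if "y \<in> region X C K i"
    using window_in_UC0[OF y i that] .
  assume unique: "UC0 X C K (circ_pt y) = {{i..i + K - 1}}"
  obtain i' where i': "i' \<in> {1..C - K + 1}" "y \<in> region X C K i'"
    using region_cover[OF assms(2) y] by blast
  then have "{i'..i' + K - 1} = {i..i + K - 1}"
    using window_in_UC0[OF y] unique by blast
  then have "i' = i"
    using assms(1) by (auto simp: Icc_eq_Icc)
  then show "y \<in> region X C K i"
    using i' by simp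
qed

end
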